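(* Let $H$ be a BF-monoid and consider the conditions: \begin{itemize} \item[(a)] There are submonoids $H_1,H_2\subseteq H$ such that $H=H_1\times H_2$ (internal direct product), where $H_1$ is half-factorial but not a group. \item[(b)] For every rational number $q$ with $1<q<\rho(H)$ there is $c\in H$ such that $\rho(\mathsf L(c^k))=\rho(\mathsf L(c))>q$ for all $k\in\mathbb N$. \item[(b')] (With $H_2$ as in (a).) For every $m\in\mathbb N_{\ge 2}$ there is $L\in\mathcal L(H_2)$ with $\min L=2$ and $\max L=m$. \end{itemize} Then: condition (a) holds whenever $H$ has a cancellative prime element $p$ (with $H_1$ the free abelian monoid generated by $p$ and $H_2=\{a\in H: p\nmid a\}$); condition (b) holds whenever $H$ has accepted elasticity. If conditions (a) and (b) hold, or conditions (a) and (b') hold, then $H$ is fully elastic.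
   Context: A monoid means a commutative semigroup $H$ with identity which is unit-cancellative (if $a=au$ then $u\in H^\times$, the group of units). An atom is a non-unit $u$ such that $u=ab$ implies $a$ or $b$ is a unit. For $a\in H$, $\mathsf L(a)\subseteq\mathbb N_0$ is the set of all $\ell$ such that $a=\varepsilon u_1\cdots u_\ell$ with $\varepsilon\in H^\times$ and atoms $u_i$; $\mathcal L(H)=\{\mathsf L(a):a\in H\}$. $H$ is a BF-monoid if every $\mathsf L(a)$ is finite and nonempty, and half-factorial if $|\mathsf L(a)|=1$ for all $a$. For a finite nonempty $L\subseteq\mathbb N$, $\rho(L)=\max L/\min L$, and $\rho(\{0\})=1$; $\rho(H)=\sup\{\rho(L):L\in\mathcal L(H)\}$. $H$ has accepted elasticity if $\rho(L)=\rho(H)$ for some $L\in\mathcal L(H)$. $H$ is fully elastic if for every rational $q$ with $1<q<\rho(H)$ there is $L\in\mathcal L(H)$ with $\rho(L)=q$. An element $p$ is prime if it is a non-unit and $p\mid ab$ implies $p\mid a$ or $p\mid b$; it is cancellative if $pb=pc$ implies $b=c$. *)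

theory Defs
  imports Main "HOL-Library.Extended_Real"
begin

text \<open>All monoids are subsets S of an ambient commutative monoid type 'a,
  sharing its identity 1 and its multiplication.\<close>

definition units_in :: "'a::comm_monoid_mult set \<Rightarrow> 'a set" where
  "units_in S = {u \<in> S. \<exists>v\<in>S. u * v = 1}"

definition dvd_in :: "'a::comm_monoid_mult set \<Rightarrow> 'a \<Rightarrow> 'a \<Rightarrow> bool" where
  "dvd_in S a b \<longleftrightarrow> (\<exists>c\<in>S. b = a * c)"

definition submonoid :: "'a::comm_monoid_mult set \<Rightarrow> bool" where
  "submonoid S \<longleftrightarrow> 1 \<in> S \<and> (\<forall>a\<in>S. \<forall>b\<in>S. a * b \<in> S)"

definition monoid_in :: "'a::comm_monoid_mult set \<Rightarrow> bool" where
  "monoid_in S \<longleftrightarrow> submonoid S \<and>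
     (\<forall>a\<in>S. \<forall>u\<in>S. a = a * u \<longrightarrow> u \<in> units_in S)"

definition atom_in :: "'a::comm_monoid_mult set \<Rightarrow> 'a \<Rightarrow> bool" where
  "atom_in S u \<longleftrightarrow> u \<in> S \<and> u \<notin> units_in S \<and>
     (\<forall>a\<in>S. \<forall>b\<in>S. u = a * b \<longrightarrow> a \<in> units_in S \<or> b \<in> units_in S)"

definition lengths :: "'a::comm_monoid_mult set \<Rightarrow> 'a \<Rightarrow> nat set" where
  "lengths S a = {l. \<exists>e\<in>units_in S. \<exists>us. length us = l \<and>
       (\<forall>x\<in>set us. atom_in S x) \<and> a = e * prod_list us}"

definition length_sets :: "'a::comm_monoid_mult set \<Rightarrow> nat set set" where
  "length_sets S = lengths S ` S"

definition BF_monoid :: "'a::comm_monoid_mult set \<Rightarrow> bool" where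
  "BF_monoid S \<longleftrightarrow> monoid_in S \<and>
     (\<forall>a\<in>S. finite (lengths S a) \<and> lengths S a \<noteq> {})"

definition half_factorial :: "'a::comm_monoid_mult set \<Rightarrow> bool" where
  "half_factorial S \<longleftrightarrow> (\<forall>a\<in>S. card (lengths S a) = 1)"

definition rho_set :: "nat set \<Rightarrow> real" where
  "rho_set L = (if L = {0} then 1 else real (Max L) / real (Min L))"

definition elasticity :: "'a::comm_monoid_mult set \<Rightarrow> ereal" where
  "elasticity S = (SUP L\<in>length_sets S. ereal (rho_set L))"

definition accepted_elasticity :: "'a::comm_monoid_mult set \<Rightarrow> bool" where
  "accepted_elasticity S \<longleftrightarrow> (\<exists>L\<in>length_sets S. ereal (rho_set L) = elasticity S)"

definition fully_elastic :: "'a::comm_monoid_mult set \<Rightarrow> bool" where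
  "fully_elastic S \<longleftrightarrow> (\<forall>q::rat. 1 < q \<and> ereal (of_rat q) < elasticity S \<longrightarrow>
       (\<exists>L\<in>length_sets S. rho_set L = of_rat q))"

definition prime_in :: "'a::comm_monoid_mult set \<Rightarrow> 'a \<Rightarrow> bool" where
  "prime_in S p \<longleftrightarrow> p \<in> S \<and> p \<notin> units_in S \<and>
     (\<forall>a\<in>S. \<forall>b\<in>S. dvd_in S p (a * b) \<longrightarrow> dvd_in S p a \<or> dvd_in S p b)"

definition cancellative_in :: "'a::comm_monoid_mult set \<Rightarrow> 'a \<Rightarrow> bool" where
  "cancellative_in S p \<longleftrightarrow> p \<in> S \<and> (\<forall>b\<in>S. \<forall>c\<in>S. p * b = p * c \<longrightarrow> b = c)"

definition internal_direct_product ::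
  "'a::comm_monoid_mult set \<Rightarrow> 'a set \<Rightarrow> 'a set \<Rightarrow> bool" where
  "internal_direct_product H H1 H2 \<longleftrightarrow> submonoid H1 \<and> submonoid H2 \<and>
     H1 \<subseteq> H \<and> H2 \<subseteq> H \<and> bij_betw (\<lambda>(a, b). a * b) (H1 \<times> H2) H"

definition cond_a :: "'a::comm_monoid_mult set \<Rightarrow> 'a set \<Rightarrow> 'a set \<Rightarrow> bool" where
  "cond_a H H1 H2 \<longleftrightarrow> internal_direct_product H H1 H2 \<and>
     half_factorial H1 \<and> units_in H1 \<noteq> H1"

definition cond_b :: "'a::comm_monoid_mult set \<Rightarrow> bool" where
  "cond_b H \<longleftrightarrow> (\<forall>q::rat. 1 < q \<and> ereal (of_rat q) < elasticity H \<longrightarrow>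
     (\<exists>c\<in>H. rho_set (lengths H c) > of_rat q \<and>
        (\<forall>k::nat. k \<ge> 1 \<longrightarrow> rho_set (lengths H (c ^ k)) = rho_set (lengths H c))))"

definition cond_b' :: "'a::comm_monoid_mult set \<Rightarrow> bool" where
  "cond_b' H2 \<longleftrightarrow> (\<forall>m::nat. m \<ge> 2 \<longrightarrow>
     (\<exists>L\<in>length_sets H2. Min L = 2 \<and> Max L = m))"

end

theory Submission
  imports Defs
begin

text \<open>If \<open>H = H\<^sub>1 \<times> H\<^sub>2\<close> with \<open>H\<^sub>1\<close> half-factorial, then \<open>L(x)\<close> is \<open>L(x\<^sub>2)\<close> shifted by the
  unique length of \<open>x\<^sub>1\<close>, so multiplying by \<open>u\<^sup>j\<close> for an atom \<open>u\<close> of \<open>H\<^sub>1\<close> adds \<open>j\<close> to every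
  length. To realise a fraction \<open>r/s\<close> below \<open>\<rho>(H)\<close> it therefore suffices to find an element
  with extreme lengths \<open>B \<le> A\<close> such that \<open>(A + j)/(B + j) = r/s\<close> for some \<open>j \<ge> 0\<close>. Under (b)
  take \<open>c\<^sup>k\<close> with \<open>k = r - s\<close>, where \<open>\<rho>(L(c)) > r/s\<close> and \<open>\<rho>(L(c\<^sup>k)) = \<rho>(L(c))\<close> force
  \<open>A = k max L(c)\<close> and \<open>B = k min L(c)\<close>; under (b') take an element of \<open>H\<^sub>2\<close> with
  \<open>B = 2\<close> and \<open>A = 2(r - s) + 2\<close>. Accepted elasticity yields (b) because always
  \<open>\<rho>(L(a\<^sup>k)) \<ge> \<rho>(L(a))\<close>. Finally a cancellative prime \<open>p\<close> splits every element uniquely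
  as \<open>p\<^sup>n b\<close> with \<open>b\<close> not divisible by \<open>p\<close>, the exponent being bounded by \<open>max L(a)\<close>.\<close>

section \<open>Units, atoms and lengths\<close>

lemma units_in_subset: "units_in S \<subseteq> S"
  by (auto simp: units_in_def)

lemma units_in_mono: "S \<subseteq> T \<Longrightarrow> units_in S \<subseteq> units_in T"
  by (auto simp: units_in_def)

lemma one_in_units_in: "submonoid S \<Longrightarrow> 1 \<in> units_in S"
  by (auto simp: units_in_def submonoid_def)

lemma units_in_mult:
  assumes "submonoid S" "x \<in> units_in S" "y \<in> units_in S"
  shows "x * y \<in> units_in S"
proof -
  obtain v w where "v \<in> S" "x * v = 1" "w \<in> S" "y * w = 1"
    using assms(2,3) by (auto simp: units_in_def)
  moreover have "x * y * (v * w) = (x * v) * (y * w)"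
    by (simp add: ac_simps)
  ultimately show ?thesis
    using assms by (auto simp: units_in_def submonoid_def)
qed

lemma units_in_factor:
  "submonoid S \<Longrightarrow> x \<in> S \<Longrightarrow> y \<in> S \<Longrightarrow> x * y \<in> units_in S \<Longrightarrow> x \<in> units_in S"
  unfolding units_in_def submonoid_def by (auto, metis mult.assoc)

lemma power_in_submonoid: "submonoid S \<Longrightarrow> x \<in> S \<Longrightarrow> x ^ n \<in> S"
  by (induction n) (auto simp: submonoid_def)

lemma prod_list_in_submonoid: "submonoid S \<Longrightarrow> set xs \<subseteq> S \<Longrightarrow> prod_list xs \<in> S"
  by (induction xs) (auto simp: submonoid_def)

lemma prod_list_in_units_in:
  "submonoid S \<Longrightarrow> \<forall>x\<in>set xs. x \<in> units_in S \<Longrightarrow> prod_list xs \<in> units_in S"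
  by (induction xs) (auto simp: one_in_units_in units_in_mult)

lemma power_in_units_in_imp:
  assumes "submonoid S" "a \<in> S" "0 < k" "a ^ k \<in> units_in S"
  shows "a \<in> units_in S"
proof -
  have "a ^ k = a * a ^ (k - 1)"
    using assms(3) by (simp add: power_eq_if)
  then show ?thesis
    using assms units_in_factor power_in_submonoid by metis
qed

lemma prod_list_map_filter:
  fixes f :: "'b \<Rightarrow> 'a::comm_monoid_mult"
  shows "prod_list (map f xs)
    = prod_list (map f (filter P xs)) * prod_list (map f (filter (\<lambda>x. \<not> P x) xs))"
  by (induction xs) (simp_all add: ac_simps)

lemma lengths_mult:
  assumes "submonoid S" "l1 \<in> lengths S a" "l2 \<in> lengths S b"
  shows "l1 + l2 \<in> lengths S (a * b)"
proof -
  obtain e1 us1 where 1: "e1 \<in> units_in S" "length us1 = l1" "\<forall>x\<in>set us1. atom_in S x"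
      "a = e1 * prod_list us1"
    using assms(2) by (auto simp: lengths_def)
  obtain e2 us2 where 2: "e2 \<in> units_in S" "length us2 = l2" "\<forall>x\<in>set us2. atom_in S x"
      "b = e2 * prod_list us2"
    using assms(3) by (auto simp: lengths_def)
  have "a * b = (e1 * e2) * prod_list (us1 @ us2)"
    using 1 2 by (simp add: ac_simps)
  moreover have "e1 * e2 \<in> units_in S"
    using 1 2 assms(1) by (simp add: units_in_mult)
  ultimately show ?thesis
    using 1 2 unfolding lengths_def by (intro CollectI bexI[of _ "e1 * e2"] exI[of _ "us1 @ us2"]) auto
qed

lemma zero_in_lengths_iff: "submonoid S \<Longrightarrow> 0 \<in> lengths S x \<longleftrightarrow> x \<in> units_in S"
  by (auto simp: lengths_def)

lemma one_in_lengths_atom: "submonoid S \<Longrightarrow> atom_in S u \<Longrightarrow> 1 \<in> lengths S u"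
  unfolding lengths_def using one_in_units_in by (intro CollectI bexI[of _ 1] exI[of _ "[u]"]) auto

lemma lengths_power: "submonoid S \<Longrightarrow> l \<in> lengths S a \<Longrightarrow> k * l \<in> lengths S (a ^ k)"
  by (induction k) (auto simp: zero_in_lengths_iff one_in_units_in intro: lengths_mult)

lemma exists_atom_if_lengths_nonempty:
  assumes "a \<notin> units_in S" "lengths S a \<noteq> {}"
  obtains u where "atom_in S u"
proof -
  obtain e us where "e \<in> units_in S" "\<forall>x\<in>set us. atom_in S x" "a = e * prod_list us"
    using assms(2) by (auto simp: lengths_def)
  with assms(1) that show ?thesis
    by (cases us) auto
qed

section \<open>Elasticity of powers\<close>

lemma rho_set_eq_divide: "0 < Min L \<Longrightarrow> rho_set L = real (Max L) / real (Min L)"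
  by (auto simp: rho_set_def)

lemma Min_pos_if_rho_set_gt_1: "1 < rho_set L \<Longrightarrow> 0 < Min L"
  by (cases "L = {0}") (auto simp: rho_set_def)

lemma Max_Min_image_add:
  fixes L :: "nat set"
  assumes "finite L" "L \<noteq> {}"
  shows "Max ((+) j ` L) = j + Max L" "Min ((+) j ` L) = j + Min L"
  using mono_Max_commute[of "(+) j" L] mono_Min_commute[of "(+) j" L] assms
  by (auto simp: mono_def)

lemma BF_monoid_imp_submonoid: "BF_monoid H \<Longrightarrow> submonoid H"
  by (simp add: BF_monoid_def monoid_in_def)

lemma BF_monoid_lengths:
  "BF_monoid H \<Longrightarrow> a \<in> H \<Longrightarrow> finite (lengths H a) \<and> lengths H a \<noteq> {}"
  by (simp add: BF_monoid_def)

lemma lengths_power_Max_Min: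
  assumes "BF_monoid H" "c \<in> H"
  shows "k * Max (lengths H c) \<le> Max (lengths H (c ^ k))"
    and "Min (lengths H (c ^ k)) \<le> k * Min (lengths H c)"
proof -
  have sm: "submonoid H" using BF_monoid_imp_submonoid[OF assms(1)] .
  have L: "finite (lengths H c)" "lengths H c \<noteq> {}"
    using BF_monoid_lengths[OF assms] by auto
  have Lk: "finite (lengths H (c ^ k))"
    using BF_monoid_lengths[OF assms(1) power_in_submonoid[OF sm assms(2)]] by auto
  show "k * Max (lengths H c) \<le> Max (lengths H (c ^ k))"
    using lengths_power[OF sm Max_in[OF L]] Max_ge[OF Lk] by blast
  show "Min (lengths H (c ^ k)) \<le> k * Min (lengths H c)"
    using lengths_power[OF sm Min_in[OF L]] Min_le[OF Lk] by blast
qed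

lemma Min_lengths_power_pos:
  assumes "BF_monoid H" "c \<in> H" "0 < Min (lengths H c)" "0 < k"
  shows "0 < Min (lengths H (c ^ k))"
proof -
  have sm: "submonoid H" using BF_monoid_imp_submonoid[OF assms(1)] .
  have ck: "c ^ k \<in> H" using power_in_submonoid[OF sm assms(2)] .
  have "0 \<notin> lengths H c"
    using assms(3) Min_le BF_monoid_lengths[OF assms(1,2)] by fastforce
  then have "c ^ k \<notin> units_in H"
    using power_in_units_in_imp[OF sm assms(2,4)] zero_in_lengths_iff[OF sm] by blast
  then have "0 \<notin> lengths H (c ^ k)"
    using zero_in_lengths_iff[OF sm] by blast
  then show ?thesis
    using Min_in BF_monoid_lengths[OF assms(1) ck] by (metis gr0I)
qed

lemma rho_lengths_le_power:
  assumes "BF_monoid H" "c \<in> H" "0 < Min (lengths H c)" "0 < k"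
  shows "rho_set (lengths H c) \<le> rho_set (lengths H (c ^ k))"
proof -
  define M where "M = Max (lengths H c)"
  define m where "m = Min (lengths H c)"
  define A where "A = Max (lengths H (c ^ k))"
  define B where "B = Min (lengths H (c ^ k))"
  have "0 < m" "0 < B"
    using assms Min_lengths_power_pos unfolding m_def B_def by auto
  have "k * M \<le> A" "B \<le> k * m"
    using lengths_power_Max_Min[OF assms(1,2)] unfolding M_def m_def A_def B_def by auto
  then have "real (k * M) \<le> real A" "real B \<le> real (k * m)"
    by linarith+
  have "real M / real m = real (k * M) / real (k * m)"
    using assms(4) by simp
  also have "\<dots> \<le> real A / real (k * m)"
    using \<open>real (k * M) \<le> real A\<close> by (rule divide_right_mono) simp
  also have "\<dots> \<le> real A / real B"
    using \<open>real B \<le> real (k * m)\<close> \<open>0 < B\<close> by (intro divide_left_mono) simp_all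
  finally show ?thesis
    using rho_set_eq_divide \<open>0 < m\<close> \<open>0 < B\<close> unfolding M_def m_def A_def B_def by simp
qed

lemma lengths_power_Max_Min_eq:
  assumes "BF_monoid H" "c \<in> H" "1 < rho_set (lengths H c)"
    and "rho_set (lengths H (c ^ k)) = rho_set (lengths H c)"
  shows "Max (lengths H (c ^ k)) = k * Max (lengths H c)"
    and "Min (lengths H (c ^ k)) = k * Min (lengths H c)"
proof -
  define M where "M = Max (lengths H c)"
  define m where "m = Min (lengths H c)"
  define A where "A = Max (lengths H (c ^ k))"
  define B where "B = Min (lengths H (c ^ k))"
  have "0 < m" "0 < B"
    using Min_pos_if_rho_set_gt_1 assms(3,4) unfolding m_def B_def by auto
  have "m \<le> M"
    using BF_monoid_lengths[OF assms(1,2)] Min_le Max_in unfolding m_def M_def by blast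
  have "real A / real B = real M / real m"
    using assms(4) rho_set_eq_divide \<open>0 < m\<close> \<open>0 < B\<close> unfolding M_def m_def A_def B_def by simp
  then have "real (A * m) = real (M * B)"
    using \<open>0 < m\<close> \<open>0 < B\<close> by (simp add: field_simps)
  then have cross: "A * m = M * B"
    by (simp only: of_nat_eq_iff)
  have bounds: "k * M \<le> A" "B \<le> k * m"
    using lengths_power_Max_Min[OF assms(1,2)] unfolding M_def m_def A_def B_def by auto
  have "A * m \<le> k * M * m"
    using cross mult_le_mono2[OF bounds(2), of M] by (simp add: ac_simps)
  then have "A * m = k * M * m"
    using mult_le_mono1[OF bounds(1), of m] by (rule antisym)
  then show "A = k * M"
    using \<open>0 < m\<close> by simp
  have "M * B = M * (k * m)"
    using cross \<open>A * m = k * M * m\<close> by (metis mult.assoc mult.commute)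
  then show "B = k * m"
    using \<open>0 < m\<close> \<open>m \<le> M\<close> by simp
qed

lemma accepted_elasticity_imp_cond_b:
  assumes "BF_monoid H" "accepted_elasticity H"
  shows "cond_b H"
  unfolding cond_b_def
proof (intro allI impI)
  fix q :: rat
  assume q: "1 < q \<and> ereal (of_rat q) < elasticity H"
  obtain a where a: "a \<in> H" "ereal (rho_set (lengths H a)) = elasticity H"
    using assms(2) by (auto simp: accepted_elasticity_def length_sets_def)
  have "ereal (of_rat q) < ereal (rho_set (lengths H a))"
    using q a(2) by simp
  then have "of_rat q < rho_set (lengths H a)"
    by simp
  moreover have "(1::real) < of_rat q"
    using q by (metis of_rat_1 of_rat_less)
  ultimately have "0 < Min (lengths H a)"
    by (meson Min_pos_if_rho_set_gt_1 less_trans)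
  have "rho_set (lengths H (a ^ k)) = rho_set (lengths H a)" if "k \<ge> 1" for k :: nat
  proof (rule antisym)
    have "ereal (rho_set (lengths H (a ^ k))) \<le> elasticity H"
      unfolding elasticity_def length_sets_def
      using power_in_submonoid[OF BF_monoid_imp_submonoid[OF assms(1)] a(1)] by (auto intro: SUP_upper)
    then show "rho_set (lengths H (a ^ k)) \<le> rho_set (lengths H a)"
      using a(2) by (metis ereal_less_eq(3))
    show "rho_set (lengths H a) \<le> rho_set (lengths H (a ^ k))"
      using rho_lengths_le_power[OF assms(1) a(1) \<open>0 < Min (lengths H a)\<close>] that by simp
  qed
  then show "\<exists>c\<in>H. of_rat q < rho_set (lengths H c) \<and>
      (\<forall>k\<ge>1. rho_set (lengths H (c ^ k)) = rho_set (lengths H c))"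
    using a(1) \<open>of_rat q < rho_set (lengths H a)\<close> by blast
qed

lemma nat_fraction_of_rat:
  assumes "1 < q"
  obtains r s :: nat where "0 < s" "s < r" "of_rat q = real r / real s"
proof -
  obtain a b where ab: "quotient_of q = (a, b)"
    by (cases "quotient_of q")
  have "0 < b" "q = of_int a / of_int b"
    using quotient_of_denom_pos[OF ab] quotient_of_div[OF ab] by auto
  moreover from this have "b < a"
    using assms by (simp add: less_divide_eq)
  ultimately have "of_rat q = real (nat a) / real (nat b)"
    by (simp add: of_rat_divide)
  then show ?thesis
    using that[of "nat b" "nat a"] \<open>0 < b\<close> \<open>b < a\<close> by simp
qed

lemma fully_elastic_if_fractions:
  assumes "\<And>r s. 0 < s \<Longrightarrow> s < r \<Longrightarrow> ereal (real r / real s) < elasticity H \<Longrightarrow>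
      \<exists>L\<in>length_sets H. rho_set L = real r / real s"
  shows "fully_elastic H"
  unfolding fully_elastic_def
proof (intro allI impI)
  fix q :: rat
  assume q: "1 < q \<and> ereal (of_rat q) < elasticity H"
  then obtain r s where "0 < s" "s < r" "of_rat q = real r / real s"
    using nat_fraction_of_rat by blast
  then show "\<exists>L\<in>length_sets H. rho_set L = of_rat q"
    using assms q by simp
qed

section \<open>Internal direct products\<close>

lemma internal_direct_product_swap:
  assumes "internal_direct_product H H1 H2"
  shows "internal_direct_product H H2 H1"
proof -
  have "bij_betw prod.swap (H2 \<times> H1) (H1 \<times> H2)"
    by (rule bij_betw_imageI) (auto simp: product_swap)
  moreover have "(\<lambda>(a, b). a * b) \<circ> prod.swap = (\<lambda>(b, a). b * a :: 'a)"
    by (auto simp: mult.commute)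
  ultimately show ?thesis
    using assms bij_betw_trans unfolding internal_direct_product_def by metis
qed

locale internal_dprod =
  fixes H H1 H2 :: "'a::comm_monoid_mult set"
  assumes submonoid_H: "submonoid H" and direct: "internal_direct_product H H1 H2"
begin

definition proj1 :: "'a \<Rightarrow> 'a" where
  "proj1 x = fst (inv_into (H1 \<times> H2) (\<lambda>(a, b). a * b) x)"

definition proj2 :: "'a \<Rightarrow> 'a" where
  "proj2 x = snd (inv_into (H1 \<times> H2) (\<lambda>(a, b). a * b) x)"

lemma submonoid_H1: "submonoid H1" and submonoid_H2: "submonoid H2"
  and H1_subset: "H1 \<subseteq> H" and H2_subset: "H2 \<subseteq> H"
  and bij_mult: "bij_betw (\<lambda>(a, b). a * b) (H1 \<times> H2) H"
  using direct by (auto simp: internal_direct_product_def)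

lemma proj_decomposition:
  assumes "x \<in> H"
  shows "proj1 x \<in> H1" "proj2 x \<in> H2" "proj1 x * proj2 x = x"
proof -
  have x: "x \<in> (\<lambda>(a, b). a * b) ` (H1 \<times> H2)"
    using bij_mult assms by (simp add: bij_betw_def)
  show "proj1 x \<in> H1" "proj2 x \<in> H2"
    using inv_into_into[OF x] by (auto simp: proj1_def proj2_def mem_Times_iff)
  show "proj1 x * proj2 x = x"
    using f_inv_into_f[OF x] by (simp add: proj1_def proj2_def split: prod.splits)
qed

lemma proj_mult_eq:
  assumes "a \<in> H1" "b \<in> H2"
  shows "proj1 (a * b) = a" "proj2 (a * b) = b"
proof -
  have "inv_into (H1 \<times> H2) (\<lambda>(a, b). a * b) ((\<lambda>(a, b). a * b) (a, b)) = (a, b)"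
    using bij_mult assms by (intro inv_into_f_f) (auto simp: bij_betw_def)
  then show "proj1 (a * b) = a" "proj2 (a * b) = b"
    by (auto simp: proj1_def proj2_def)
qed

lemma one_in_H1: "1 \<in> H1" and one_in_H2: "1 \<in> H2"
  using submonoid_H1 submonoid_H2 by (auto simp: submonoid_def)

lemma proj_H1: "a \<in> H1 \<Longrightarrow> proj1 a = a \<and> proj2 a = 1"
  using proj_mult_eq[OF _ one_in_H2, of a] by simp

lemma proj_mult:
  assumes "x \<in> H" "y \<in> H"
  shows "proj1 (x * y) = proj1 x * proj1 y" "proj2 (x * y) = proj2 x * proj2 y"
proof -
  have "proj1 x * proj1 y \<in> H1" "proj2 x * proj2 y \<in> H2"
    using submonoid_H1 submonoid_H2 proj_decomposition assms by (auto simp: submonoid_def)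
  moreover have "x * y = (proj1 x * proj2 x) * (proj1 y * proj2 y)"
    using proj_decomposition(3) assms by simp
  then have "x * y = (proj1 x * proj1 y) * (proj2 x * proj2 y)"
    by (simp add: ac_simps)
  ultimately show "proj1 (x * y) = proj1 x * proj1 y" "proj2 (x * y) = proj2 x * proj2 y"
    using proj_mult_eq by auto
qed

lemma proj1_prod_list: "set xs \<subseteq> H \<Longrightarrow> proj1 (prod_list xs) = prod_list (map proj1 xs)"
  using proj_H1[OF one_in_H1] by (induction xs) (auto simp: proj_mult prod_list_in_submonoid[OF submonoid_H])

lemma units_in_H1: "x \<in> H1 \<Longrightarrow> x \<in> units_in H \<Longrightarrow> x \<in> units_in H1"
proof -
  assume x: "x \<in> H1" "x \<in> units_in H"
  then obtain v where v: "v \<in> H" "x * v = 1"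
    by (auto simp: units_in_def)
  have "x * proj1 v = 1"
    using proj_mult[of x v] v x H1_subset proj_H1[OF x(1)] proj_H1[OF one_in_H1] by auto
  then show ?thesis
    using x proj_decomposition(1)[OF v(1)] by (auto simp: units_in_def)
qed

lemma proj1_units_in: "e \<in> units_in H \<Longrightarrow> proj1 e \<in> units_in H1"
proof -
  assume "e \<in> units_in H"
  then obtain v where v: "e \<in> H" "v \<in> H" "e * v = 1"
    by (auto simp: units_in_def)
  then have "proj1 e * proj1 v = 1"
    using proj_mult(1) proj_H1[OF one_in_H1] by metis
  then show ?thesis
    using proj_decomposition(1) v by (auto simp: units_in_def)
qed

lemma units_in_if_proj_units_in:
  assumes "x \<in> H" "proj1 x \<in> units_in H1" "proj2 x \<in> units_in H2"
  shows "x \<in> units_in H"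
proof -
  have "proj1 x * proj2 x \<in> units_in H"
    using assms(2,3) units_in_mono[OF H1_subset] units_in_mono[OF H2_subset]
    by (intro units_in_mult[OF submonoid_H]) auto
  then show ?thesis
    using proj_decomposition(3)[OF assms(1)] by simp
qed

lemma atom_in_H1:
  assumes u: "atom_in H1 u"
  shows "atom_in H u"
proof -
  have uH1: "u \<in> H1"
    using u by (simp add: atom_in_def)
  have "a \<in> units_in H \<or> b \<in> units_in H" if ab: "a \<in> H" "b \<in> H" "u = a * b" for a b
  proof -
    have 1: "proj1 a * proj1 b = u" and 2: "proj2 a * proj2 b = 1"
      using proj_mult ab proj_H1[OF uH1] by metis+
    have "proj1 a \<in> units_in H1 \<or> proj1 b \<in> units_in H1"
      using u 1 proj_decomposition(1) ab(1,2) unfolding atom_in_def by metis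
    moreover have "proj2 b * proj2 a = 1"
      using 2 by (simp add: mult.commute)
    then have "proj2 a \<in> units_in H2" "proj2 b \<in> units_in H2"
      using 2 proj_decomposition(2) ab(1,2) unfolding units_in_def by blast+
    ultimately show ?thesis
      using units_in_if_proj_units_in ab(1,2) by blast
  qed
  then show ?thesis
    using u units_in_H1 H1_subset by (auto simp: atom_in_def)
qed

lemma lengths_H1_subset: "lengths H1 a \<subseteq> lengths H a"
  using units_in_mono[OF H1_subset] atom_in_H1 unfolding lengths_def by blast

lemma atom_in_proj1_if_proj2_unit:
  assumes w: "atom_in H w" and u2: "proj2 w \<in> units_in H2"
  shows "atom_in H1 (proj1 w)"
proof -
  have wH: "w \<in> H" and nu: "w \<notin> units_in H"
    using w by (auto simp: atom_in_def)
  note d = proj_decomposition[OF wH]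
  have "proj1 w \<notin> units_in H1"
    using units_in_if_proj_units_in[OF wH _ u2] nu by blast
  moreover have "a \<in> units_in H1 \<or> b \<in> units_in H1"
    if ab: "a \<in> H1" "b \<in> H1" "proj1 w = a * b" for a b
  proof -
    have "a \<in> H" "b \<in> H" "b * proj2 w \<in> H"
      using d ab H1_subset H2_subset submonoid_H by (auto simp: submonoid_def)
    moreover have "w = a * (b * proj2 w)"
      using d ab by (simp add: ac_simps)
    ultimately have "a \<in> units_in H \<or> b * proj2 w \<in> units_in H"
      using w unfolding atom_in_def by blast
    then have "a \<in> units_in H \<or> b \<in> units_in H"
      using units_in_factor[OF submonoid_H \<open>b \<in> H\<close>] d(2) H2_subset by blast
    then show ?thesis
      using units_in_H1 ab(1,2) by blast
  qed
  ultimately show ?thesis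
    using d by (auto simp: atom_in_def)
qed

end

sublocale internal_dprod \<subseteq> swapped: internal_dprod H H2 H1
  using submonoid_H direct internal_direct_product_swap by unfold_locales

context internal_dprod
begin

lemma swapped_proj:
  assumes "x \<in> H"
  shows "swapped.proj1 x = proj2 x" "swapped.proj2 x = proj1 x"
proof -
  have "x = swapped.proj2 x * swapped.proj1 x"
    using swapped.proj_decomposition(3)[OF assms] by (simp add: mult.commute)
  then show "swapped.proj1 x = proj2 x" "swapped.proj2 x = proj1 x"
    using proj_mult_eq swapped.proj_decomposition(1,2)[OF assms] by metis+
qed

lemma atom_in_H_proj_units_in:
  assumes w: "atom_in H w"
  shows "proj1 w \<in> units_in H1 \<or> proj2 w \<in> units_in H2"
proof -
  have wH: "w \<in> H"
    using w by (simp add: atom_in_def)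
  have "proj1 w \<in> H" "proj2 w \<in> H" "w = proj1 w * proj2 w"
    using proj_decomposition[OF wH] H1_subset H2_subset by auto
  then have "proj1 w \<in> units_in H \<or> proj2 w \<in> units_in H"
    using w unfolding atom_in_def by blast
  then show ?thesis
    using units_in_H1 swapped.units_in_H1 proj_decomposition[OF wH] by blast
qed

lemma atom_in_proj2_iff:
  assumes w: "atom_in H w"
  shows "atom_in H2 (proj2 w) \<longleftrightarrow> \<not> atom_in H1 (proj1 w)"
proof -
  have wH: "w \<in> H"
    using w by (simp add: atom_in_def)
  show ?thesis
    using atom_in_H_proj_units_in[OF w] atom_in_proj1_if_proj2_unit[OF w]
      swapped.atom_in_proj1_if_proj2_unit[OF w] swapped_proj[OF wH]
    by (auto simp: atom_in_def)
qed

lemma proj1_units_in_if_not_atom: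
  "atom_in H w \<Longrightarrow> \<not> atom_in H1 (proj1 w) \<Longrightarrow> proj1 w \<in> units_in H1"
  using atom_in_H_proj_units_in atom_in_proj1_if_proj2_unit by blast

lemma length_filter_in_lengths_proj1:
  assumes e: "e \<in> units_in H" and us: "\<forall>w\<in>set us. atom_in H w"
  shows "length (filter (\<lambda>w. atom_in H1 (proj1 w)) us) \<in> lengths H1 (proj1 (e * prod_list us))"
proof -
  define P where "P = (\<lambda>w. atom_in H1 (proj1 w))"
  define unit_part where "unit_part = proj1 e * prod_list (map proj1 (filter (\<lambda>w. \<not> P w) us))"
  define atom_parts where "atom_parts = map proj1 (filter P us)"
  have usH: "set us \<subseteq> H" and eH: "e \<in> H"
    using us e units_in_subset by (auto simp: atom_in_def)
  have "proj1 (e * prod_list us) = proj1 e * prod_list (map proj1 us)"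
    using proj_mult(1)[OF eH prod_list_in_submonoid[OF submonoid_H usH]] proj1_prod_list[OF usH]
    by simp
  also have "\<dots> = unit_part * prod_list atom_parts"
    unfolding unit_part_def atom_parts_def using prod_list_map_filter[of proj1 us P] by (simp add: ac_simps)
  finally have "proj1 (e * prod_list us) = unit_part * prod_list atom_parts" .
  moreover have "unit_part \<in> units_in H1"
    using proj1_units_in[OF e] proj1_units_in_if_not_atom us unfolding unit_part_def P_def
    by (intro units_in_mult[OF submonoid_H1] prod_list_in_units_in[OF submonoid_H1]) auto
  moreover have "\<forall>v\<in>set atom_parts. atom_in H1 v"
    by (auto simp: atom_parts_def P_def)
  moreover have "length atom_parts = length (filter P us)"
    by (simp add: atom_parts_def)
  ultimately show ?thesis
    unfolding lengths_def P_def by blast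
qed

end

(* The context is reopened so that the lemma above becomes available as its swapped instance. *)
context internal_dprod
begin

lemma length_filter_in_lengths_proj2:
  assumes e: "e \<in> units_in H" and us: "\<forall>w\<in>set us. atom_in H w"
  shows "length (filter (\<lambda>w. atom_in H2 (proj2 w)) us) \<in> lengths H2 (proj2 (e * prod_list us))"
proof -
  have usH: "set us \<subseteq> H" and eH: "e \<in> H"
    using us e units_in_subset by (auto simp: atom_in_def)
  then have "e * prod_list us \<in> H"
    using prod_list_in_submonoid[OF submonoid_H usH] submonoid_H by (auto simp: submonoid_def)
  moreover have "filter (\<lambda>w. atom_in H2 (swapped.proj1 w)) us = filter (\<lambda>w. atom_in H2 (proj2 w)) us"
    using usH swapped_proj by (intro filter_cong) auto
  ultimately show ?thesis
    using swapped.length_filter_in_lengths_proj1[OF e us] swapped_proj by simp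
qed

text \<open>Every atom of \<open>H\<close> is an atom of one factor times a unit of the other.\<close>
lemma lengths_eq_sumset:
  assumes x: "x \<in> H"
  shows "lengths H x = {l1 + l2 |l1 l2. l1 \<in> lengths H1 (proj1 x) \<and> l2 \<in> lengths H2 (proj2 x)}"
proof (intro equalityI subsetI)
  fix l
  assume "l \<in> lengths H x"
  then obtain e us where f: "e \<in> units_in H" "length us = l" "\<forall>w\<in>set us. atom_in H w"
      "x = e * prod_list us"
    by (auto simp: lengths_def)
  define P where "P = (\<lambda>w. atom_in H1 (proj1 w))"
  have "filter (\<lambda>w. atom_in H2 (proj2 w)) us = filter (\<lambda>w. \<not> P w) us"
    using f(3) atom_in_proj2_iff unfolding P_def by (intro filter_cong) auto
  then have "length (filter P us) \<in> lengths H1 (proj1 x)"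
    "length (filter (\<lambda>w. \<not> P w) us) \<in> lengths H2 (proj2 x)"
    using length_filter_in_lengths_proj1[OF f(1,3)] length_filter_in_lengths_proj2[OF f(1,3)] f(4)
    unfolding P_def by simp_all
  moreover have "l = length (filter P us) + length (filter (\<lambda>w. \<not> P w) us)"
    using f(2) sum_length_filter_compl[of P us] by simp
  ultimately show "l \<in> {l1 + l2 |l1 l2. l1 \<in> lengths H1 (proj1 x) \<and> l2 \<in> lengths H2 (proj2 x)}"
    by blast
next
  fix l
  assume "l \<in> {l1 + l2 |l1 l2. l1 \<in> lengths H1 (proj1 x) \<and> l2 \<in> lengths H2 (proj2 x)}"
  then show "l \<in> lengths H x"
    using lengths_mult[OF submonoid_H] lengths_H1_subset swapped.lengths_H1_subset
      proj_decomposition(3)[OF x] by fastforce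
qed

end

locale internal_dprod_hf = internal_dprod +
  assumes half_factorial_H1: "half_factorial H1" and H1_not_group: "units_in H1 \<noteq> H1"
begin

definition length1 :: "'a \<Rightarrow> nat" where
  "length1 a = the_elem (lengths H1 a)"

lemma lengths_H1: "a \<in> H1 \<Longrightarrow> lengths H1 a = {length1 a}"
  using half_factorial_H1 unfolding half_factorial_def length1_def
  by (auto simp: card_1_singleton_iff)

lemma lengths_eq_image_add:
  "x \<in> H \<Longrightarrow> lengths H x = (+) (length1 (proj1 x)) ` lengths H2 (proj2 x)"
  using lengths_eq_sumset proj_decomposition(1) lengths_H1 by fastforce

lemma lengths_H2: "b \<in> H2 \<Longrightarrow> lengths H b = lengths H2 b"
proof -
  assume b: "b \<in> H2"
  have "0 \<in> lengths H1 1"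
    using zero_in_lengths_iff[OF submonoid_H1] one_in_units_in[OF submonoid_H1] by blast
  then have "length1 1 = 0"
    using lengths_H1[OF one_in_H1] by simp
  moreover have "proj1 b = 1" "proj2 b = b"
    using swapped.proj_H1[OF b] swapped_proj b H2_subset by auto
  ultimately show ?thesis
    using lengths_eq_image_add[of b] b H2_subset by auto
qed

lemma exists_atom_H1:
  obtains u where "atom_in H1 u"
proof -
  obtain a where "a \<in> H1" "a \<notin> units_in H1"
    using H1_not_group units_in_subset by blast
  then show ?thesis
    using lengths_H1 exists_atom_if_lengths_nonempty that by blast
qed

lemma lengths_atom_power_mult:
  assumes u: "atom_in H1 u" and x: "x \<in> H"
  shows "lengths H (u ^ j * x) = (+) j ` lengths H x"
proof -
  have "u ^ j \<in> H1"
    using power_in_submonoid[OF submonoid_H1] u by (simp add: atom_in_def)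
  note d = proj_decomposition[OF x]
  have uj: "u ^ j * proj1 x \<in> H1"
    using \<open>u ^ j \<in> H1\<close> d submonoid_H1 by (auto simp: submonoid_def)
  have "u ^ j * x = (u ^ j * proj1 x) * proj2 x"
    using d by (simp add: ac_simps)
  then have proj: "proj1 (u ^ j * x) = u ^ j * proj1 x" "proj2 (u ^ j * x) = proj2 x"
    using proj_mult_eq[OF uj d(2)] by auto
  have "j * 1 \<in> lengths H1 (u ^ j)"
    using lengths_power[OF submonoid_H1 one_in_lengths_atom[OF submonoid_H1 u]] .
  then have "j + length1 (proj1 x) \<in> lengths H1 (u ^ j * proj1 x)"
    using lengths_mult[OF submonoid_H1] lengths_H1 d(1) by fastforce
  then have "length1 (u ^ j * proj1 x) = j + length1 (proj1 x)"
    using lengths_H1[OF uj] by auto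
  moreover have "u ^ j * x \<in> H"
    using \<open>u ^ j \<in> H1\<close> H1_subset x submonoid_H by (auto simp: submonoid_def)
  ultimately show ?thesis
    using lengths_eq_image_add[OF x] lengths_eq_image_add proj by (simp add: image_image add.assoc)
qed

lemma fraction_in_rho_length_sets:
  assumes x: "x \<in> H" "finite (lengths H x)" "lengths H x \<noteq> {}"
    and pos: "0 < s" "0 < j + Min (lengths H x)"
    and cross: "s * (j + Max (lengths H x)) = r * (j + Min (lengths H x))"
  shows "\<exists>L\<in>length_sets H. rho_set L = real r / real s"
proof -
  obtain u where u: "atom_in H1 u"
    using exists_atom_H1 .
  define y where "y = u ^ j * x"
  have "y \<in> H"
    using power_in_submonoid[OF submonoid_H] u x(1) H1_subset submonoid_H
    unfolding y_def by (auto simp: atom_in_def submonoid_def)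
  have "lengths H y = (+) j ` lengths H x"
    unfolding y_def using lengths_atom_power_mult[OF u x(1)] .
  then have "Max (lengths H y) = j + Max (lengths H x)" "Min (lengths H y) = j + Min (lengths H x)"
    using Max_Min_image_add[OF x(2,3)] by simp_all
  then have "rho_set (lengths H y) = real (j + Max (lengths H x)) / real (j + Min (lengths H x))"
    using rho_set_eq_divide pos(2) by simp
  also have "\<dots> = real r / real s"
  proof -
    have ne: "real (j + Min (lengths H x)) \<noteq> 0" "real s \<noteq> 0"
      using pos by auto
    have "real (j + Max (lengths H x)) * real s = real r * real (j + Min (lengths H x))"
      using cross by (metis of_nat_mult mult.commute)
    then show ?thesis
      unfolding frac_eq_eq[OF ne] .
  qed
  finally show ?thesis
    using \<open>y \<in> H\<close> unfolding length_sets_def by blast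
qed

end

lemma cond_a_imp_internal_dprod_hf: "submonoid H \<Longrightarrow> cond_a H H1 H2 \<Longrightarrow> internal_dprod_hf H H1 H2"
  by unfold_locales (auto simp: cond_a_def)

lemma fully_elastic_if_cond_a_cond_b:
  assumes BF: "BF_monoid H" and "cond_a H H1 H2" and b: "cond_b H"
  shows "fully_elastic H"
proof (rule fully_elastic_if_fractions)
  interpret internal_dprod_hf H H1 H2
    using cond_a_imp_internal_dprod_hf BF_monoid_imp_submonoid assms(1,2) by blast
  fix r s :: nat
  assume rs: "0 < s" "s < r" "ereal (real r / real s) < elasticity H"
  have "of_rat (of_nat r / of_nat s) = real r / real s"
    by (simp add: of_rat_divide)
  moreover have "1 < (of_nat r / of_nat s :: rat)"
    using rs by simp
  ultimately obtain c where c: "c \<in> H" "real r / real s < rho_set (lengths H c)"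
      "\<forall>k\<ge>1. rho_set (lengths H (c ^ k)) = rho_set (lengths H c)"
    using b rs(3) unfolding cond_b_def by metis
  define M where "M = Max (lengths H c)"
  define m where "m = Min (lengths H c)"
  define k where "k = r - s"
  define j where "j = s * M - r * m"
  have "1 < real r / real s"
    using rs by simp
  then have "0 < m"
    using c(2) Min_pos_if_rho_set_gt_1 unfolding m_def by fastforce
  have "real r / real s < real M / real m"
    using c(2) rho_set_eq_divide \<open>0 < m\<close> unfolding M_def m_def by simp
  then have "r * m < s * M"
    using rs \<open>0 < m\<close> by (simp add: field_simps flip: of_nat_mult)
  have ck: "c ^ k \<in> H"
    using power_in_submonoid[OF submonoid_H c(1)] .
  have "1 < rho_set (lengths H c)"
    using c(2) \<open>1 < real r / real s\<close> by linarith
  then have powers: "Max (lengths H (c ^ k)) = k * M" "Min (lengths H (c ^ k)) = k * m"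
    using lengths_power_Max_Min_eq[OF BF c(1)] c(3) rs(2) unfolding M_def m_def k_def by auto
  have "r = s + k" "s * M = r * m + j"
    using rs(2) \<open>r * m < s * M\<close> unfolding k_def j_def by auto
  have "s * (j + k * M) = s * j + k * (s * M)"
    by (simp add: algebra_simps)
  also have "\<dots> = s * j + k * (r * m + j)"
    using \<open>s * M = r * m + j\<close> by simp
  also have "\<dots> = r * (j + k * m)"
    using \<open>r = s + k\<close> by (simp add: algebra_simps)
  finally show "\<exists>L\<in>length_sets H. rho_set L = real r / real s"
    using fraction_in_rho_length_sets[OF ck _ _ rs(1)] BF_monoid_lengths[OF BF ck] powers
      rs(2) \<open>0 < m\<close> unfolding k_def by simp
qed

lemma fully_elastic_if_cond_a_cond_b':
  assumes BF: "BF_monoid H" and "cond_a H H1 H2" and b': "cond_b' H2"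
  shows "fully_elastic H"
proof (rule fully_elastic_if_fractions)
  interpret internal_dprod_hf H H1 H2
    using cond_a_imp_internal_dprod_hf BF_monoid_imp_submonoid assms(1,2) by blast
  fix r s :: nat
  assume rs: "0 < s" "s < r"
  have "\<exists>L\<in>length_sets H2. Min L = 2 \<and> Max L = 2 * (r - s) + 2"
    using b' unfolding cond_b'_def by simp
  then obtain b where b: "b \<in> H2" "Min (lengths H2 b) = 2" "Max (lengths H2 b) = 2 * (r - s) + 2"
    unfolding length_sets_def by blast
  have bH: "b \<in> H"
    using b(1) H2_subset by auto
  have "s * (2 * s - 2 + Max (lengths H b)) = r * (2 * s - 2 + Min (lengths H b))"
    using b lengths_H2 rs by (simp add: algebra_simps)
  then show "\<exists>L\<in>length_sets H. rho_set L = real r / real s"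
    using fraction_in_rho_length_sets[OF bH _ _ rs(1)] BF_monoid_lengths[OF BF bH]
      lengths_H2[OF b(1)] b(2) by simp
qed

section \<open>Powers of a cancellative prime\<close>

lemma inj_power_if_not_unit:
  assumes S: "monoid_in S" and p: "p \<in> S" "p \<notin> units_in S"
  shows "inj (\<lambda>n::nat. p ^ n)"
proof -
  have sm: "submonoid S"
    using S by (simp add: monoid_in_def)
  have "p ^ n \<noteq> p ^ m" if "n < m" for n m :: nat
  proof
    assume "p ^ n = p ^ m"
    moreover have "p ^ n * p ^ (m - n) = p ^ m"
      using that by (metis power_add le_add_diff_inverse less_imp_le)
    ultimately have "p ^ n = p ^ n * p ^ (m - n)"
      by simp
    then have "p ^ (m - n) \<in> units_in S"
      using S power_in_submonoid[OF sm p(1)] unfolding monoid_in_def by blast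
    then show False
      using power_in_units_in_imp[OF sm p(1), of "m - n"] p(2) that by simp
  qed
  then show ?thesis
    by (metis injI linorder_neqE_nat)
qed

lemma prime_in_imp_atom_in:
  assumes S: "monoid_in S" and p: "prime_in S p"
  shows "atom_in S p"
proof -
  have sm: "submonoid S" and pS: "p \<in> S" and pnu: "p \<notin> units_in S"
    using S p by (auto simp: monoid_in_def prime_in_def)
  have unit: "y \<in> units_in S" if xy: "x \<in> S" "y \<in> S" "p = x * y" "dvd_in S p x" for x y
  proof -
    obtain z where z: "z \<in> S" "x = p * z"
      using xy(4) by (auto simp: dvd_in_def)
    have "z * y \<in> S"
      using z(1) xy(2) sm by (auto simp: submonoid_def)
    moreover have "p = p * (z * y)"
      using xy(3) z(2) by (simp add: mult.assoc)
    ultimately have "y * z \<in> units_in S"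
      using S pS unfolding monoid_in_def by (metis mult.commute)
    then show ?thesis
      using units_in_factor[OF sm xy(2) z(1)] by blast
  qed
  have "x \<in> units_in S \<or> y \<in> units_in S" if xy: "x \<in> S" "y \<in> S" "p = x * y" for x y
  proof -
    have "dvd_in S p (x * y)"
      using sm xy(3) unfolding dvd_in_def by (intro bexI[of _ 1]) (auto simp: submonoid_def)
    then have "dvd_in S p x \<or> dvd_in S p y"
      using p xy(1,2) unfolding prime_in_def by blast
    then show ?thesis
      using unit[OF xy] unit[OF xy(2,1)] xy(3) by (metis mult.commute)
  qed
  then show ?thesis
    using pS pnu by (auto simp: atom_in_def)
qed

lemma submonoid_powers: "submonoid (range (\<lambda>n::nat. p ^ n))"
  unfolding submonoid_def by (auto simp flip: power_add intro: range_eqI[of _ _ 0])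

lemma units_in_powers:
  assumes inj: "inj (\<lambda>n::nat. p ^ n)"
  shows "units_in (range (\<lambda>n::nat. p ^ n)) = {1}"
proof
  show "units_in (range (\<lambda>n::nat. p ^ n)) \<subseteq> {1}"
  proof
    fix x
    assume "x \<in> units_in (range (\<lambda>n::nat. p ^ n))"
    then obtain a b :: nat where "x = p ^ a" "p ^ (a + b) = p ^ 0"
      by (auto simp: units_in_def power_add)
    then show "x \<in> {1}"
      using injD[OF inj] by fastforce
  qed
  show "{1} \<subseteq> units_in (range (\<lambda>n::nat. p ^ n))"
    using one_in_units_in[OF submonoid_powers] by simp
qed

lemma atom_in_powers_iff:
  assumes inj: "inj (\<lambda>n::nat. p ^ n)"
  shows "atom_in (range (\<lambda>n::nat. p ^ n)) x \<longleftrightarrow> x = p"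
proof
  assume at: "atom_in (range (\<lambda>n::nat. p ^ n)) x"
  then obtain k where k: "x = p ^ k"
    by (auto simp: atom_in_def)
  have "k \<noteq> 0"
    using at k units_in_powers[OF inj] by (auto simp: atom_in_def)
  moreover have "\<not> 2 \<le> k"
  proof
    assume "2 \<le> k"
    then have "x = p ^ 1 * p ^ (k - 1)" "p ^ 1 \<noteq> p ^ 0" "p ^ (k - 1) \<noteq> p ^ 0"
      using k injD[OF inj, of 1 0] injD[OF inj, of "k - 1" 0] by (cases k, auto)
    then have "x = p ^ 1 * p ^ (k - 1)" "p ^ 1 \<notin> units_in (range (\<lambda>n::nat. p ^ n))"
        "p ^ (k - 1) \<notin> units_in (range (\<lambda>n::nat. p ^ n))"
      using units_in_powers[OF inj] by auto
    then show False
      using at rangeI unfolding atom_in_def by blast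
  qed
  ultimately have "k = 1"
    by simp
  then show "x = p"
    using k by simp
next
  assume x: "x = p"
  have "p \<noteq> 1"
    using injD[OF inj, of 1 0] by auto
  have "p ^ i = 1 \<or> p ^ j = 1" if "p = p ^ i * p ^ j" for i j
  proof -
    have "p ^ 1 = p ^ (i + j)"
      using that by (simp add: power_add)
    then have "i + j = 1"
      using injD[OF inj] by metis
    then show ?thesis
      by (cases i) auto
  qed
  then have "\<forall>a\<in>range (\<lambda>n::nat. p ^ n). \<forall>b\<in>range (\<lambda>n::nat. p ^ n). p = a * b \<longrightarrow> a = 1 \<or> b = 1"
    by auto
  moreover have "p \<in> range (\<lambda>n::nat. p ^ n)"
    using range_eqI[of p "\<lambda>n. p ^ n" 1] by simp
  ultimately show "atom_in (range (\<lambda>n::nat. p ^ n)) x"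
    using \<open>p \<noteq> 1\<close> unfolding x atom_in_def units_in_powers[OF inj] by blast
qed

lemma lengths_powers:
  assumes inj: "inj (\<lambda>n::nat. p ^ n)"
  shows "lengths (range (\<lambda>n::nat. p ^ n)) (p ^ n) = {n}"
proof -
  have "lengths (range (\<lambda>n::nat. p ^ n)) (p ^ n)
      = {l. \<exists>us. length us = l \<and> (\<forall>x\<in>set us. x = p) \<and> p ^ n = prod_list us}"
    unfolding lengths_def units_in_powers[OF inj] atom_in_powers_iff[OF inj] by auto
  also have "\<dots> = {n}"
  proof safe
    fix us :: "'a list"
    assume "\<forall>x\<in>set us. x = p" "p ^ n = prod_list us"
    then have "p ^ n = p ^ length us"
      by (metis prod_list_replicate replicate_length_same)
    then show "length us = n"
      using injD[OF inj] by metis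
  qed (auto intro: exI[of _ "replicate n p"])
  finally show ?thesis .
qed

lemma half_factorial_powers:
  assumes "inj (\<lambda>n::nat. p ^ n)"
  shows "half_factorial (range (\<lambda>n::nat. p ^ n))"
  using lengths_powers[OF assms] by (auto simp: half_factorial_def)

text \<open>The exponent of \<open>p\<close> in \<open>a\<close> is bounded by \<open>max L(a)\<close>, since \<open>p\<close> is an atom.\<close>
lemma exists_power_times_non_multiple:
  assumes BF: "BF_monoid H" and p: "atom_in H p" and a: "a \<in> H"
  obtains n b where "b \<in> H" "\<not> dvd_in H p b" "a = p ^ n * b"
proof -
  have sm: "submonoid H"
    using BF_monoid_imp_submonoid[OF BF] .
  define N where "N = {n. \<exists>b\<in>H. a = p ^ n * b}"
  have L: "finite (lengths H a)"
    using BF_monoid_lengths[OF BF a] by simp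
  have bound: "n \<le> Max (lengths H a)" if n: "n \<in> N" for n
  proof -
    obtain b where b: "b \<in> H" "a = p ^ n * b"
      using n unfolding N_def by auto
    obtain l where "l \<in> lengths H b"
      using BF_monoid_lengths[OF BF b(1)] by auto
    then have "n * 1 + l \<in> lengths H a"
      using lengths_mult[OF sm lengths_power[OF sm one_in_lengths_atom[OF sm p]]] b(2) by blast
    then show ?thesis
      using Max_ge[OF L] by fastforce
  qed
  then have "finite N"
    by (meson finite_nat_set_iff_bounded_le)
  moreover have "0 \<in> N"
    using a unfolding N_def by auto
  ultimately have "Max N \<in> N"
    using Max_in by blast
  then obtain b where b: "b \<in> H" "a = p ^ Max N * b"
    unfolding N_def by blast
  have "\<not> dvd_in H p b"
  proof
    assume "dvd_in H p b"
    then obtain c where "c \<in> H" "a = p ^ Suc (Max N) * c"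
      using b by (auto simp: dvd_in_def ac_simps)
    then have "Suc (Max N) \<in> N"
      unfolding N_def by blast
    then show False
      using Max_ge[OF \<open>finite N\<close>] by fastforce
  qed
  then show ?thesis
    using that b by blast
qed

lemma cancellative_in_power:
  assumes "submonoid H" "cancellative_in H p" "b \<in> H" "c \<in> H" "p ^ n * b = p ^ n * c"
  shows "b = c"
  using assms(5)
proof (induction n)
  case (Suc n)
  have "p * (p ^ n * b) = p * (p ^ n * c)"
    using Suc.prems by (simp add: mult.assoc)
  moreover have "p ^ n * b \<in> H" "p ^ n * c \<in> H"
    using assms(1,3,4) power_in_submonoid[OF assms(1), of p n] assms(2)
    by (auto simp: cancellative_in_def submonoid_def)
  ultimately show ?case
    using Suc.IH assms(2) by (auto simp: cancellative_in_def)
qed simp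

lemma power_times_non_multiple_unique:
  assumes sm: "submonoid H" and p: "cancellative_in H p"
    and b: "b \<in> H" "\<not> dvd_in H p b" and b': "b' \<in> H" "\<not> dvd_in H p b'"
    and eq: "p ^ n * b = p ^ m * b'"
  shows "n = m \<and> b = b'"
proof -
  have le: "n = m \<and> b = b'"
    if "n \<le> m" "b \<in> H" "b' \<in> H" "\<not> dvd_in H p b" "p ^ n * b = p ^ m * b'" for n m b b'
  proof -
    have "p ^ n * b = p ^ n * (p ^ (m - n) * b')"
      using that(1,5) by (metis mult.assoc power_add le_add_diff_inverse)
    moreover have "p ^ (m - n) * b' \<in> H"
      using power_in_submonoid[OF sm, of p "m - n"] that(3) sm p
      by (auto simp: cancellative_in_def submonoid_def)
    ultimately have b: "b = p ^ (m - n) * b'"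
      using cancellative_in_power[OF sm p that(2)] by blast
    have "m - n = 0"
    proof (rule ccontr)
      assume "m - n \<noteq> 0"
      then have "b = p * (p ^ (m - n - 1) * b')"
        using b by (cases "m - n") (auto simp: mult.assoc)
      moreover have "p ^ (m - n - 1) * b' \<in> H"
        using power_in_submonoid[OF sm] p that(3) sm by (auto simp: cancellative_in_def submonoid_def)
      ultimately show False
        using that(4) unfolding dvd_in_def by blast
    qed
    then show ?thesis
      using b that(1) by simp
  qed
  show ?thesis
    using le[of n m b b'] le[of m n b' b] assms by (cases "n \<le> m") auto
qed

lemma cond_a_prime_powers:
  assumes BF: "BF_monoid H" and prime: "prime_in H p" and canc: "cancellative_in H p"
  shows "cond_a H (range (\<lambda>n::nat. p ^ n)) {a \<in> H. \<not> dvd_in H p a}"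
proof -
  let ?H1 = "range (\<lambda>n::nat. p ^ n)" and ?H2 = "{a \<in> H. \<not> dvd_in H p a}"
  have sm: "submonoid H" and S: "monoid_in H"
    using BF by (auto simp: BF_monoid_def monoid_in_def)
  have pH: "p \<in> H" and pnu: "p \<notin> units_in H"
    using prime by (auto simp: prime_in_def)
  have inj: "inj (\<lambda>n::nat. p ^ n)"
    using inj_power_if_not_unit[OF S pH pnu] .
  have "\<not> dvd_in H p 1"
    using pH pnu by (auto simp: dvd_in_def units_in_def)
  then have "submonoid ?H2"
    using sm prime unfolding submonoid_def prime_in_def by auto
  moreover have H1_subset: "?H1 \<subseteq> H"
    using power_in_submonoid[OF sm pH] by auto
  moreover have "inj_on (\<lambda>(a, b). a * b) (?H1 \<times> ?H2)"
    using power_times_non_multiple_unique[OF sm canc] by (auto intro!: inj_onI)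
  moreover have "(\<lambda>(a, b). a * b) ` (?H1 \<times> ?H2) = H"
  proof
    show "(\<lambda>(a, b). a * b) ` (?H1 \<times> ?H2) \<subseteq> H"
      using H1_subset sm by (auto simp: submonoid_def)
    show "H \<subseteq> (\<lambda>(a, b). a * b) ` (?H1 \<times> ?H2)"
    proof
      fix a
      assume "a \<in> H"
      then obtain n b where "b \<in> H" "\<not> dvd_in H p b" "a = p ^ n * b"
        using exists_power_times_non_multiple[OF BF prime_in_imp_atom_in[OF S prime]] by blast
      then show "a \<in> (\<lambda>(a, b). a * b) ` (?H1 \<times> ?H2)"
        by (auto intro!: image_eqI[of _ _ "(p ^ n, b)"])
    qed
  qed
  moreover have "p \<in> ?H1 - units_in ?H1"
    using range_eqI[of p "\<lambda>n. p ^ n" 1] injD[OF inj, of 1 0] units_in_powers[OF inj] by auto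
  ultimately show ?thesis
    unfolding cond_a_def internal_direct_product_def bij_betw_def
    using submonoid_powers half_factorial_powers[OF inj] by blast
qed

theorem proposition3p2:
  fixes H :: "'a::comm_monoid_mult set"
  assumes "BF_monoid H"
  shows "(\<forall>p. prime_in H p \<and> cancellative_in H p \<longrightarrow>
            cond_a H (range (\<lambda>n::nat. p ^ n)) {a \<in> H. \<not> dvd_in H p a})
       \<and> (accepted_elasticity H \<longrightarrow> cond_b H)
       \<and> ((\<exists>H1 H2. cond_a H H1 H2) \<and> cond_b H \<longrightarrow> fully_elastic H)
       \<and> ((\<exists>H1 H2. cond_a H H1 H2 \<and> cond_b' H2) \<longrightarrow> fully_elastic H)"
  using cond_a_prime_powers[OF assms] accepted_elasticity_imp_cond_b[OF assms]
    fully_elastic_if_cond_a_cond_b[OF assms] fully_elastic_if_cond_a_cond_b'[OF assms]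
  by blast

end
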